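(* Let $K=(C,\langle Q_i,1\le i\le k\rangle)$ and $K'=(C',\langle Q'_j,1\le j\le l\rangle)$ be two non-degenerate CMIs in pure form, with $\mathrm{can}(K)=(C,\langle\mathbb I_K,\mathbb I_K,P_i,1\le i\le t\rangle)$ and $\mathrm{can}(K')=(C',\langle\mathbb I_{K'},\mathbb I_{K'},P'_j,1\le j\le s\rangle)$. If $K\sim K'$, then $\langle P_i,1\le i\le t\rangle=\langle P'_j,1\le j\le s\rangle$.
   Context: Setting: $X_1,\dots,X_n$ jointly distributed discrete random variables with $H(X_i)<\infty$; distribution unspecified. $X_\alpha=(X_i,i\in\alpha)$, $X_\emptyset$ constant. A CMI is $K=(C,\langle Q_1,\dots,Q_k\rangle)$, $k\ge0$, $C\subseteq\{1,\dots,n\}$, $\langle\cdot\rangle$ an unordered multiset of subsets; valid (for a given distribution) if $\sum_iH(X_{Q_i}|X_C)-H(X_{Q_1},\dots,X_{Q_k}|X_C)=0$. Empty members may be deleted; equality of collections is multiset equality. $K\sim K'$: for every joint distribution both valid or both invalid. Degenerate = valid for every distribution, written $(\cdot,\langle\ \rangle)$. Pure form: all $Q_i\ne\emptyset$, $Q_i\cap C=\emptyset$. For pure $K$: $\mathbb I_K$ = set of indices lying in at least two members of the collection if $k\ge2$, else $\emptyset$; $P_1,\dots,P_t$ the nonempty sets among $Q_i\setminus\mathbb I_K$; $\mathrm{can}(K)=(\cdot,\langle\ \rangle)$ if $k\le1$, $(C,\langle\mathbb I_K,\mathbb I_K\rangle)$ if $k\ge2,\mathbb I_K\ne\emptyset,t\le1$,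 $(C,\langle P_1..P_t\rangle)$ if $k\ge2,\mathbb I_K=\emptyset$, $(C,\langle\mathbb I_K,\mathbb I_K,P_1..P_t\rangle)$ if $k\ge2,\mathbb I_K\ne\emptyset,t\ge2$. The general-form notation $(C,\langle\mathbb I_K,\mathbb I_K,P_i,1\le i\le t\rangle)$ means: the two copies of $\mathbb I_K$ are omitted when $\mathbb I_K=\emptyset$, and in this notation $t=0$ when $\mathrm{can}(K)=(C,\langle\mathbb I_K,\mathbb I_K\rangle)$ (so $t\ne1$). *)

theory Defs
  imports "HOL-Probability.Probability_Mass_Function" "HOL-Analysis.Infinite_Sum" "HOL-Library.Multiset"
begin

text \<open>A joint distribution of the discrete random variables X_1,...,X_n is a pmf on
  outcomes \<omega> :: nat \<Rightarrow> nat, where X_i(\<omega>) = \<omega> i (values relabelled into nat).\<close>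

definition proj :: "nat set \<Rightarrow> (nat \<Rightarrow> nat) \<Rightarrow> (nat \<Rightarrow> nat)" where
  "proj A \<omega> = (\<lambda>i. if i \<in> A then \<omega> i else 0)"

definition marg :: "(nat \<Rightarrow> nat) pmf \<Rightarrow> nat set \<Rightarrow> (nat \<Rightarrow> nat) pmf" where
  "marg p A = map_pmf (proj A) p"

definition ent_terms :: "'a pmf \<Rightarrow> 'a \<Rightarrow> real" where
  "ent_terms q x = - pmf q x * log 2 (pmf q x)"

definition entropy_pmf :: "'a pmf \<Rightarrow> real" where
  "entropy_pmf q = infsum (ent_terms q) UNIV"

definition finite_entropy :: "'a pmf \<Rightarrow> bool" where
  "finite_entropy q \<longleftrightarrow> ent_terms q summable_on UNIV"

definition H :: "(nat \<Rightarrow> nat) pmf \<Rightarrow> nat set \<Rightarrow> real" where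
  "H p A = entropy_pmf (marg p A)"

definition condH :: "(nat \<Rightarrow> nat) pmf \<Rightarrow> nat set \<Rightarrow> nat set \<Rightarrow> real" where
  "condH p Q C = H p (Q \<union> C) - H p C"

definition admissible :: "nat \<Rightarrow> (nat \<Rightarrow> nat) pmf \<Rightarrow> bool" where
  "admissible n p \<longleftrightarrow> (\<forall>i\<in>{1..n}. finite_entropy (marg p {i}))"

type_synonym cmi = "nat set \<times> nat set multiset"

definition valid :: "(nat \<Rightarrow> nat) pmf \<Rightarrow> cmi \<Rightarrow> bool" where
  "valid p K = (case K of (C, Qs) \<Rightarrow>
     (\<Sum>Q\<in>#Qs. condH p Q C) - condH p (\<Union> (set_mset Qs)) C = 0)"

definition is_cmi :: "nat \<Rightarrow> cmi \<Rightarrow> bool" where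
  "is_cmi n K \<longleftrightarrow> fst K \<subseteq> {1..n} \<and> (\<forall>Q\<in>#snd K. Q \<subseteq> {1..n})"

definition cmi_equiv :: "nat \<Rightarrow> cmi \<Rightarrow> cmi \<Rightarrow> bool" where
  "cmi_equiv n K K' \<longleftrightarrow> (\<forall>p. admissible n p \<longrightarrow> (valid p K \<longleftrightarrow> valid p K'))"

definition degenerate :: "nat \<Rightarrow> cmi \<Rightarrow> bool" where
  "degenerate n K \<longleftrightarrow> (\<forall>p. admissible n p \<longrightarrow> valid p K)"

definition pure :: "cmi \<Rightarrow> bool" where
  "pure K \<longleftrightarrow> (\<forall>Q\<in>#snd K. Q \<noteq> {} \<and> Q \<inter> fst K = {})"

definition IK :: "cmi \<Rightarrow> nat set" where
  "IK K = (if size (snd K) \<ge> 2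
           then {i. size (filter_mset (\<lambda>Q. i \<in> Q) (snd K)) \<ge> 2} else {})"

definition Praw :: "cmi \<Rightarrow> nat set multiset" where
  "Praw K = filter_mset (\<lambda>P. P \<noteq> {}) (image_mset (\<lambda>Q. Q - IK K) (snd K))"

definition can :: "cmi \<Rightarrow> cmi" where
  "can K = (let (C, Qs) = K; I = IK K; P = Praw K in
     if size Qs \<le> 1 then ({}, {#})
     else if I \<noteq> {} \<and> size P \<le> 1 then (C, {#I, I#})
     else if I = {} then (C, P)
     else (C, {#I, I#} + P))"

text \<open>The P-part of can(K) in the general notation (C,<I_K,I_K,P_i,1<=i<=t>):
  the collection of can(K) with the two copies of I_K removed (when I_K is nonempty).\<close>
definition canP :: "cmi \<Rightarrow> nat set multiset" where
  "canP K = snd (can K) - (if IK K = {} then {#} else {#IK K, IK K#})"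

end

theory Submission
  imports Defs
begin

text \<open>Let a single fair bit be carried by the variables X_i with i in S, all other variables
  being constant. Then H(X_A) is 1 or 0 according as A meets S or not, so K is valid for this
  distribution unless S avoids C and meets at least two members of K. Equivalent CMIs therefore
  agree on these sets S, and already the singletons and pairs among them determine the P-part of
  can(K): {x} qualifies iff x lies in I_K, and two points outside I_K form a qualifying pair iff
  they lie in different blocks P_i. Hence the P_i are the classes of ``not separated'' on the
  points separated from some other point; such points exist only when t \<ge> 2, which is exactly
  when can(K) has a nonempty P-part.\<close>

lemma sum_mset_of_bool: "(\<Sum>x\<in>#M. of_bool (P x) :: real) = real (size (filter_mset P M))"
  by (induction M) auto

lemma two_le_size_mset:
  assumes "a \<in># M" "b \<in># M" "a \<noteq> b"
  shows "2 \<le> size M"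
proof -
  obtain M' where M: "M = add_mset a M'"
    using assms(1) by (metis multi_member_split)
  then have "M' \<noteq> {#}"
    using assms(2,3) by auto
  then show ?thesis
    using M by (cases M') auto
qed

lemma size_filter_mset_disj_conj:
  "size (filter_mset (\<lambda>x. P x \<or> Q x) M) + size (filter_mset (\<lambda>x. P x \<and> Q x) M) =
    size (filter_mset P M) + size (filter_mset Q M)"
  by (induction M) auto

lemma size_filter_mset_pos_iff: "0 < size (filter_mset P M) \<longleftrightarrow> (\<exists>x\<in>#M. P x)"
  by (induction M) auto

lemma count_image_mset_eq_size_filter:
  "count (image_mset f M) y = size (filter_mset (\<lambda>x. f x = y) M)"
  by (induction M) auto

lemma ent_terms_pmf_of_set:
  assumes "finite B" "B \<noteq> {}"
  shows "ent_terms (pmf_of_set B) x = (if x \<in> B then log 2 (card B) / card B else 0)"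
  using assms by (auto simp: ent_terms_def log_divide card_gt_0_iff)

lemma entropy_pmf_of_set:
  assumes "finite B" "B \<noteq> {}"
  shows "entropy_pmf (pmf_of_set B) = log 2 (card B)"
proof -
  have "entropy_pmf (pmf_of_set B) = infsum (ent_terms (pmf_of_set B)) B"
    unfolding entropy_pmf_def
    by (rule infsum_cong_neutral) (auto simp: ent_terms_pmf_of_set assms)
  also have "\<dots> = (\<Sum>x\<in>B. log 2 (card B) / card B)"
    using assms by (simp add: ent_terms_pmf_of_set)
  also have "\<dots> = log 2 (card B)"
    using assms by simp
  finally show ?thesis .
qed

lemma finite_entropy_pmf_of_set:
  assumes "finite B" "B \<noteq> {}"
  shows "finite_entropy (pmf_of_set B)"
proof -
  have "ent_terms (pmf_of_set B) summable_on UNIV \<longleftrightarrow> ent_terms (pmf_of_set B) summable_on B"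
    by (rule summable_on_cong_neutral) (auto simp: ent_terms_pmf_of_set assms)
  then show ?thesis
    using assms by (simp add: finite_entropy_def)
qed

lemma map_pmf_of_set_doubleton: "map_pmf f (pmf_of_set {a, b}) = pmf_of_set {f a, f b}"
proof (cases "f a = f b")
  case True
  then have "map_pmf f (pmf_of_set {a, b}) = map_pmf (\<lambda>_. f a) (pmf_of_set {a, b})"
    by (intro map_pmf_cong) auto
  then show ?thesis
    using True by (simp add: pmf_of_set_singleton)
next
  case False
  then have "inj_on f {a, b}"
    by (auto simp: inj_on_def)
  then show ?thesis
    by (simp add: map_pmf_of_set_inj)
qed

definition shared_bit :: "nat set \<Rightarrow> (nat \<Rightarrow> nat) pmf" where
  "shared_bit S = pmf_of_set {(\<lambda>_. 0), indicator S}"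

lemma proj_zero_eq_proj_indicator: "proj A (\<lambda>_. 0) = proj A (indicator S) \<longleftrightarrow> A \<inter> S = {}"
  by (auto simp: proj_def indicator_def fun_eq_iff)

lemma marg_shared_bit: "marg (shared_bit S) A = pmf_of_set {proj A (\<lambda>_. 0), proj A (indicator S)}"
  by (simp add: marg_def shared_bit_def map_pmf_of_set_doubleton)

lemma H_shared_bit: "H (shared_bit S) A = of_bool (A \<inter> S \<noteq> {})"
  using proj_zero_eq_proj_indicator[of A S]
  by (auto simp: H_def marg_shared_bit entropy_pmf_of_set)

lemma admissible_shared_bit: "admissible n (shared_bit S)"
  by (simp add: admissible_def marg_shared_bit finite_entropy_pmf_of_set)

definition meets_twice :: "cmi \<Rightarrow> nat set \<Rightarrow> bool" where
  "meets_twice K S \<longleftrightarrow> S \<inter> fst K = {} \<and> 2 \<le> size (filter_mset (\<lambda>Q. Q \<inter> S \<noteq> {}) (snd K))"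

lemma valid_shared_bit_iff: "valid (shared_bit S) K \<longleftrightarrow> \<not> meets_twice K S"
proof (cases K)
  case (Pair C Qs)
  show ?thesis
  proof (cases "C \<inter> S = {}")
    case False
    then show ?thesis
      by (auto simp: Pair valid_def meets_twice_def condH_def H_shared_bit Int_Un_distrib2)
  next
    case True
    define m where "m = size (filter_mset (\<lambda>Q. Q \<inter> S \<noteq> {}) Qs)"
    have "(\<Sum>Q\<in>#Qs. condH (shared_bit S) Q C) = (\<Sum>Q\<in>#Qs. of_bool (Q \<inter> S \<noteq> {}))"
      using True by (simp add: condH_def H_shared_bit Int_Un_distrib2)
    also have "\<dots> = real m"
      unfolding m_def by (rule sum_mset_of_bool)
    finally have sum: "(\<Sum>Q\<in>#Qs. condH (shared_bit S) Q C) = real m" .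
    have "\<Union> (set_mset Qs) \<inter> S \<noteq> {} \<longleftrightarrow> m \<noteq> 0"
      by (auto simp: m_def filter_mset_eq_conv)
    then have union: "condH (shared_bit S) (\<Union> (set_mset Qs)) C = of_bool (m \<noteq> 0)"
      using True by (simp add: condH_def H_shared_bit Int_Un_distrib2)
    have "real m - of_bool (m \<noteq> 0) = 0 \<longleftrightarrow> \<not> 2 \<le> m"
      by (cases m) auto
    then show ?thesis
      using True by (simp add: Pair valid_def sum union meets_twice_def m_def Int_commute)
  qed
qed

lemma cmi_equiv_imp_meets_twice_eq:
  assumes "cmi_equiv n K K'"
  shows "meets_twice K = meets_twice K'"
proof
  fix S
  have "valid (shared_bit S) K \<longleftrightarrow> valid (shared_bit S) K'"
    using assms admissible_shared_bit by (simp add: cmi_equiv_def)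
  then show "meets_twice K S = meets_twice K' S"
    by (simp add: valid_shared_bit_iff)
qed

definition split_points :: "nat \<Rightarrow> (nat set \<Rightarrow> bool) \<Rightarrow> nat set" where
  "split_points n b = {x\<in>{1..n}. \<not> b {x} \<and> (\<exists>y\<in>{1..n}. \<not> b {y} \<and> b {x, y})}"

definition split_class :: "nat \<Rightarrow> (nat set \<Rightarrow> bool) \<Rightarrow> nat \<Rightarrow> nat set" where
  "split_class n b x = {y\<in>split_points n b. \<not> b {x, y}}"

definition split_classes :: "nat \<Rightarrow> (nat set \<Rightarrow> bool) \<Rightarrow> nat set multiset" where
  "split_classes n b = mset_set (split_class n b ` split_points n b)"

locale block_separation =
  fixes n :: nat and b :: "nat set \<Rightarrow> bool" and P :: "nat set multiset"
  assumes count_block_le_1: "count P X \<le> 1"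
    and disjoint_blocks: "disjoint (set_mset P)"
    and nonempty_blocks: "{} \<notin># P"
    and block_subset: "X \<in># P \<Longrightarrow> X \<subseteq> {x\<in>{1..n}. \<not> b {x}}"
    and separated_pair_iff: "x \<in> {1..n} \<Longrightarrow> \<not> b {x} \<Longrightarrow> y \<in> {1..n} \<Longrightarrow> \<not> b {y} \<Longrightarrow>
      b {x, y} \<longleftrightarrow> (\<exists>X\<in>#P. x \<in> X) \<and> (\<exists>Y\<in>#P. y \<in> Y) \<and> \<not> (\<exists>X\<in>#P. x \<in> X \<and> y \<in> X)"
begin

lemma block_unique: "X \<in># P \<Longrightarrow> Y \<in># P \<Longrightarrow> x \<in> X \<Longrightarrow> x \<in> Y \<Longrightarrow> X = Y"
  using disjoint_blocks by (auto simp: disjoint_def)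

lemma other_block:
  assumes "2 \<le> size P" "X \<in># P"
  obtains Y where "Y \<in># P" "Y \<noteq> X"
proof -
  obtain P' where P': "P = add_mset X P'"
    using assms(2) by (metis multi_member_split)
  then have "P' \<noteq> {#}"
    using assms(1) by auto
  then obtain Y where "Y \<in># P'"
    by blast
  moreover have "X \<notin># P'"
    using count_block_le_1[of X] P' by (simp add: not_in_iff)
  ultimately show ?thesis
    using that P' by fastforce
qed

lemma separated_points_in_distinct_blocks:
  assumes xy: "x \<in> {1..n}" "\<not> b {x}" "y \<in> {1..n}" "\<not> b {y}" and "b {x, y}"
  obtains X Y where "X \<in># P" "Y \<in># P" "x \<in> X" "y \<in> Y" "X \<noteq> Y"
proof -
  have "(\<exists>X\<in>#P. x \<in> X) \<and> (\<exists>Y\<in>#P. y \<in> Y) \<and> \<not> (\<exists>X\<in>#P. x \<in> X \<and> y \<in> X)"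
    using separated_pair_iff[OF xy] assms(5) by simp
  then show ?thesis
    using that by blast
qed

lemma separated_iff_not_in_block:
  assumes "X \<in># P" "Y \<in># P" "x \<in> X" "y \<in> Y"
  shows "b {x, y} \<longleftrightarrow> y \<notin> X"
proof -
  have xy: "x \<in> {1..n}" "\<not> b {x}" "y \<in> {1..n}" "\<not> b {y}"
    using block_subset assms by blast+
  have "(\<exists>Z\<in>#P. x \<in> Z \<and> y \<in> Z) \<longleftrightarrow> y \<in> X"
    using block_unique assms(1,3) by blast
  moreover have "\<exists>X\<in>#P. x \<in> X" "\<exists>Y\<in>#P. y \<in> Y"
    using assms by auto
  ultimately show ?thesis
    using separated_pair_iff[OF xy] by simp
qed

lemma split_points_eq: "split_points n b = (if size P \<le> 1 then {} else \<Union> (set_mset P))"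
proof (cases "size P \<le> 1")
  case True
  have "\<not> b {x, y}" if xy: "x \<in> {1..n}" "\<not> b {x}" "y \<in> {1..n}" "\<not> b {y}" for x y
  proof
    assume "b {x, y}"
    then obtain X Y where "X \<in># P" "Y \<in># P" "X \<noteq> Y"
      using separated_points_in_distinct_blocks[OF xy] by metis
    then have "2 \<le> size P"
      by (rule two_le_size_mset)
    then show False
      using True by simp
  qed
  then have "split_points n b = {}"
    unfolding split_points_def by blast
  then show ?thesis
    using True by simp
next
  case False
  have "x \<in> split_points n b" if X: "X \<in># P" "x \<in> X" for X x
  proof -
    have "2 \<le> size P"
      using False by simp
    then obtain Y where Y: "Y \<in># P" "Y \<noteq> X"
      using X(1) by (rule other_block)
    then obtain y where y: "y \<in> Y"
      using nonempty_blocks by (metis all_not_in_conv)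
    have "y \<notin> X"
      using block_unique X Y y by blast
    then have "b {x, y}"
      using separated_iff_not_in_block X Y y by blast
    moreover have "x \<in> {1..n}" "\<not> b {x}" "y \<in> {1..n}" "\<not> b {y}"
      using block_subset X Y y by blast+
    ultimately show ?thesis
      unfolding split_points_def by blast
  qed
  moreover have "x \<in> \<Union> (set_mset P)" if x: "x \<in> split_points n b" for x
  proof -
    obtain y where "x \<in> {1..n}" "\<not> b {x}" "y \<in> {1..n}" "\<not> b {y}" "b {x, y}"
      using x unfolding split_points_def by blast
    then obtain X where "X \<in># P" "x \<in> X"
      by (rule separated_points_in_distinct_blocks)
    then show ?thesis
      by blast
  qed
  ultimately show ?thesis
    using False by auto
qed

lemma split_class_eq:
  assumes "2 \<le> size P" "X \<in># P" "x \<in> X"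
  shows "split_class n b x = X"
proof -
  have "split_class n b x = {y\<in>\<Union> (set_mset P). \<not> b {x, y}}"
    using assms(1) by (simp add: split_class_def split_points_eq)
  also have "\<dots> = {y\<in>\<Union> (set_mset P). y \<in> X}"
    using separated_iff_not_in_block[OF assms(2) _ assms(3)] by blast
  also have "\<dots> = X"
    using assms(2) by blast
  finally show ?thesis .
qed

lemma mset_set_set_mset_blocks: "mset_set (set_mset P) = P"
proof (rule multiset_eqI)
  fix X
  show "count (mset_set (set_mset P)) X = count P X"
  proof (cases "X \<in># P")
    case True
    then have "count P X = 1"
      using count_block_le_1[of X] by (simp add: le_antisym Suc_le_eq)
    then show ?thesis
      using True by simp
  qed (simp add: not_in_iff)
qed

lemma split_classes_eq: "split_classes n b = (if size P \<le> 1 then {#} else P)"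
proof (cases "size P \<le> 1")
  case False
  have "split_class n b ` \<Union> (set_mset P) = set_mset P"
  proof
    show "split_class n b ` \<Union> (set_mset P) \<subseteq> set_mset P"
      using False split_class_eq by auto
    show "set_mset P \<subseteq> split_class n b ` \<Union> (set_mset P)"
    proof
      fix X assume "X \<in># P"
      moreover obtain x where "x \<in> X"
        using nonempty_blocks \<open>X \<in># P\<close> by (metis all_not_in_conv)
      ultimately show "X \<in> split_class n b ` \<Union> (set_mset P)"
        using False split_class_eq[of X x] by force
    qed
  qed
  then show ?thesis
    using False by (simp add: split_classes_def split_points_eq mset_set_set_mset_blocks)
qed (simp add: split_classes_def split_points_eq)

end

definition cover_count :: "nat set multiset \<Rightarrow> nat \<Rightarrow> nat" where
  "cover_count Qs x = size (filter_mset (\<lambda>Q. x \<in> Q) Qs)"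

lemma IK_eq_cover_count: "IK K = {x. 2 \<le> cover_count (snd K) x}"
  unfolding IK_def cover_count_def by (auto intro: order_trans[OF _ size_filter_mset_lesseq])

lemma covering_member_unique:
  assumes "cover_count Qs x < 2" "Q \<in># Qs" "Q' \<in># Qs" "x \<in> Q" "x \<in> Q'"
  shows "Q = Q'"
proof (rule ccontr)
  assume "Q \<noteq> Q'"
  then have "2 \<le> cover_count Qs x"
    unfolding cover_count_def using assms(2-5) by (intro two_le_size_mset[of Q _ Q']) auto
  then show False
    using assms(1) by simp
qed

lemma in_Praw_iff: "X \<in># Praw K \<longleftrightarrow> X \<noteq> {} \<and> (\<exists>Q\<in>#snd K. X = Q - IK K)"
  by (auto simp: Praw_def)

lemma common_block_Praw_iff:
  assumes "x \<notin> IK K" "y \<notin> IK K"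
  shows "(\<exists>X\<in>#Praw K. x \<in> X \<and> y \<in> X) \<longleftrightarrow> (\<exists>Q\<in>#snd K. x \<in> Q \<and> y \<in> Q)"
proof
  assume "\<exists>X\<in>#Praw K. x \<in> X \<and> y \<in> X"
  then obtain X where "X \<in># Praw K" "x \<in> X" "y \<in> X"
    by blast
  moreover from this(1) obtain Q where "Q \<in># snd K" "X = Q - IK K"
    by (auto simp: in_Praw_iff)
  ultimately show "\<exists>Q\<in>#snd K. x \<in> Q \<and> y \<in> Q"
    by blast
next
  assume "\<exists>Q\<in>#snd K. x \<in> Q \<and> y \<in> Q"
  then obtain Q where Q: "Q \<in># snd K" "x \<in> Q - IK K" "y \<in> Q - IK K"
    using assms by blast
  then have "Q - IK K \<in># Praw K"
    unfolding in_Praw_iff by blast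
  then show "\<exists>X\<in>#Praw K. x \<in> X \<and> y \<in> X"
    using Q(2,3) by (intro bexI[of _ "Q - IK K"]) auto
qed

lemma count_Praw_le_1: "count (Praw K) X \<le> 1"
proof (cases "X \<in># Praw K")
  case True
  then obtain x where x: "x \<in> X" "x \<notin> IK K"
    by (auto simp: in_Praw_iff)
  have "count (Praw K) X = size (filter_mset (\<lambda>Q. Q - IK K = X) (snd K))"
    using True by (auto simp: Praw_def count_image_mset_eq_size_filter)
  also have "\<dots> \<le> cover_count (snd K) x"
    unfolding cover_count_def
    by (intro size_mset_mono filter_mset_mono_strong) (use x in auto)
  also have "\<dots> \<le> 1"
    using x(2) by (simp add: IK_eq_cover_count)
  finally show ?thesis .
qed (simp add: not_in_iff)

lemma disjoint_Praw: "disjoint (set_mset (Praw K))"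
proof (rule disjointI)
  fix X Y assume XY: "X \<in># Praw K" "Y \<in># Praw K" "X \<noteq> Y"
  then obtain Q Q' where Q: "Q \<in># snd K" "X = Q - IK K" "Q' \<in># snd K" "Y = Q' - IK K"
    by (auto simp: in_Praw_iff)
  show "X \<inter> Y = {}"
  proof (rule ccontr)
    assume "X \<inter> Y \<noteq> {}"
    then obtain x where "x \<in> Q" "x \<in> Q'" "x \<notin> IK K"
      using Q by blast
    then have "Q = Q'"
      using Q covering_member_unique[of "snd K" x Q Q'] by (simp add: IK_eq_cover_count)
    then show False
      using Q XY(3) by simp
  qed
qed

lemma meets_twice_singleton_iff:
  assumes "pure K"
  shows "meets_twice K {x} \<longleftrightarrow> x \<in> IK K"
proof -
  have "filter_mset (\<lambda>Q. Q \<inter> {x} \<noteq> {}) (snd K) = filter_mset (\<lambda>Q. x \<in> Q) (snd K)"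
    by (intro filter_mset_cong) auto
  moreover have "x \<notin> fst K" if "x \<in> IK K"
  proof -
    have "0 < cover_count (snd K) x"
      using that by (simp add: IK_eq_cover_count)
    then obtain Q where "Q \<in># snd K" "x \<in> Q"
      by (auto simp: cover_count_def size_filter_mset_pos_iff)
    then show ?thesis
      using assms by (auto simp: pure_def)
  qed
  ultimately show ?thesis
    by (auto simp: meets_twice_def IK_eq_cover_count cover_count_def)
qed

lemma meets_twice_pair_iff:
  assumes "pure K" "x \<notin> IK K" "y \<notin> IK K"
  shows "meets_twice K {x, y} \<longleftrightarrow>
    (\<exists>Q\<in>#snd K. x \<in> Q) \<and> (\<exists>Q\<in>#snd K. y \<in> Q) \<and> \<not> (\<exists>Q\<in>#snd K. x \<in> Q \<and> y \<in> Q)"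
proof -
  \<comment> \<open>Inclusion-exclusion, where x and y each lie in at most one member.\<close>
  define c where "c R = size (filter_mset R (snd K))" for R
  have "filter_mset (\<lambda>Q. Q \<inter> {x, y} \<noteq> {}) (snd K) = filter_mset (\<lambda>Q. x \<in> Q \<or> y \<in> Q) (snd K)"
    by (intro filter_mset_cong) auto
  then have "c (\<lambda>Q. Q \<inter> {x, y} \<noteq> {}) + c (\<lambda>Q. x \<in> Q \<and> y \<in> Q) = c (\<lambda>Q. x \<in> Q) + c (\<lambda>Q. y \<in> Q)"
    unfolding c_def by (simp add: size_filter_mset_disj_conj)
  moreover have "c (\<lambda>Q. x \<in> Q) \<le> 1" "c (\<lambda>Q. y \<in> Q) \<le> 1"
    using assms(2,3) by (auto simp: c_def IK_eq_cover_count cover_count_def)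
  moreover have "c (\<lambda>Q. x \<in> Q \<and> y \<in> Q) \<le> c (\<lambda>Q. x \<in> Q)"
    unfolding c_def by (intro size_mset_mono filter_mset_mono_strong) auto
  ultimately have "2 \<le> c (\<lambda>Q. Q \<inter> {x, y} \<noteq> {}) \<longleftrightarrow>
      0 < c (\<lambda>Q. x \<in> Q) \<and> 0 < c (\<lambda>Q. y \<in> Q) \<and> \<not> 0 < c (\<lambda>Q. x \<in> Q \<and> y \<in> Q)"
    by linarith
  moreover have "{x, y} \<inter> fst K = {}" if "\<exists>Q\<in>#snd K. x \<in> Q" "\<exists>Q\<in>#snd K. y \<in> Q"
    using that assms(1) by (auto simp: pure_def)
  ultimately show ?thesis
    unfolding meets_twice_def c_def size_filter_mset_pos_iff by blast
qed

lemma block_separation_Praw: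
  assumes "is_cmi n K" "pure K"
  shows "block_separation n (meets_twice K) (Praw K)"
proof
  show "count (Praw K) X \<le> 1" for X
    by (rule count_Praw_le_1)
  show "disjoint (set_mset (Praw K))"
    by (rule disjoint_Praw)
  show "{} \<notin># Praw K"
    by (simp add: in_Praw_iff)
  show "X \<subseteq> {x\<in>{1..n}. \<not> meets_twice K {x}}" if "X \<in># Praw K" for X
  proof -
    obtain Q where Q: "Q \<in># snd K" "X = Q - IK K"
      using \<open>X \<in># Praw K\<close> by (auto simp: in_Praw_iff)
    then have "Q \<subseteq> {1..n}"
      using assms(1) by (simp add: is_cmi_def)
    then show ?thesis
      using Q assms(2) by (auto simp: meets_twice_singleton_iff)
  qed
  show "meets_twice K {x, y} \<longleftrightarrow>
      (\<exists>X\<in>#Praw K. x \<in> X) \<and> (\<exists>Y\<in>#Praw K. y \<in> Y) \<and> \<not> (\<exists>X\<in>#Praw K. x \<in> X \<and> y \<in> X)"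
    if "\<not> meets_twice K {x}" "\<not> meets_twice K {y}" for x y
  proof -
    have xy: "x \<notin> IK K" "y \<notin> IK K"
      using that assms(2) by (simp_all add: meets_twice_singleton_iff)
    then show ?thesis
      using meets_twice_pair_iff[OF assms(2) xy] common_block_Praw_iff[OF xy]
        common_block_Praw_iff[OF xy(1) xy(1)] common_block_Praw_iff[OF xy(2) xy(2)]
      by simp
  qed
qed

lemma size_Praw_le: "size (Praw K) \<le> size (snd K)"
  unfolding Praw_def by (metis size_filter_mset_lesseq size_image_mset)

lemma canP_eq_Praw:
  assumes "pure K"
  shows "canP K = (if size (Praw K) \<le> 1 then {#} else Praw K)"
proof (cases "size (snd K) \<le> 1")
  case True
  then show ?thesis
    using size_Praw_le[of K] by (auto simp: canP_def can_def split: prod.split)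
next
  case False
  show ?thesis
  proof (cases "IK K = {}")
    case True
    have "filter_mset (\<lambda>P. P \<noteq> {}) (snd K) = filter_mset (\<lambda>_. True) (snd K)"
      using assms by (intro filter_mset_cong) (auto simp: pure_def)
    then have "Praw K = snd K"
      using True by (simp add: Praw_def)
    then show ?thesis
      using False True by (auto simp: canP_def can_def Let_def split: prod.split)
  next
    case False
    then show ?thesis
      using \<open>\<not> size (snd K) \<le> 1\<close> by (auto simp: canP_def can_def Let_def split: prod.split)
  qed
qed

lemma canP_eq_split_classes:
  assumes "is_cmi n K" "pure K"
  shows "canP K = split_classes n (meets_twice K)"
  using block_separation.split_classes_eq[OF block_separation_Praw[OF assms]] canP_eq_Praw[OF assms(2)]
  by simp

theorem mainTheorem5:
  fixes n :: nat and K K' :: cmi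
  assumes "is_cmi n K" and "is_cmi n K'"
    and "pure K" and "pure K'"
    and "\<not> degenerate n K" and "\<not> degenerate n K'"
    and "cmi_equiv n K K'"
  shows "canP K = canP K'"
proof -
  have "meets_twice K = meets_twice K'"
    using assms(7) by (rule cmi_equiv_imp_meets_twice_eq)
  then show ?thesis
    using canP_eq_split_classes[OF assms(1,3)] canP_eq_split_classes[OF assms(2,4)] by simp
qed

end
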